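(* Let $n$ be odd and let $\mathcal S\subseteq\mathbb Z_3^{2n}$ be an isotropic subspace of dimension $n-1$, with $A(z)=\sum_{\chi\in\mathcal S}z^{\mathrm{wt}(\chi)}$ and $B(z)=\sum_{\chi\in\mathcal S^\perp}z^{\mathrm{wt}(\chi)}$. Then $3A(-1/2)+B(-1/2)=0$. If moreover $B(-1/2)\neq0$ and $3A'(-1/2)+B'(-1/2)=0$, then also $3A''(-1/2)+B''(-1/2)=0$, and consequently the function $$\epsilon'(\epsilon)=\frac{3\big(3A(z(\epsilon))+B(z(\epsilon))\big)}{4B(z(\epsilon))},\qquad z(\epsilon)=\frac{3-\epsilon}{8\epsilon-6},$$ satisfies $\epsilon'(\epsilon)=O(\epsilon^3)$ as $\epsilon\to0$.
   Context: For $\chi=(\vec u|\vec v)\in\mathbb Z_3^{2n}$, $\mathrm{wt}(\chi)=\#\{i:(u_i,v_i)\neq(0,0)\}$. The symplectic form is $[\chi,\chi']=\vec u\cdot\vec v'-\vec u'\cdot\vec v$; $\mathcal S$ isotropic means $[\chi,\chi']=0$ for all $\chi,\chi'\in\mathcal S$; $\mathcal S^\perp=\{\chi\in\mathbb Z_3^{2n}:[\chi,\sigma]=0\ \forall\sigma\in\mathcal S\}$. Primes denote derivatives in $z$. (Note $z(0)=-1/2$.) *)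

theory Defs
  imports "HOL-Analysis.Analysis" "HOL-Library.Landau_Symbols"
begin

text \<open>A vector chi = (u|v) in F^{2n} (F a field with 3 elements, i.e. Z_3) is modelled as
  a vector indexed by 'n + 'n: u_i = chi $ Inl i, v_i = chi $ Inr i, with n = CARD('n).\<close>

definition wt :: "'f::field ^ ('n::finite + 'n) \<Rightarrow> nat" where
  "wt chi = card {i :: 'n. chi $ Inl i \<noteq> 0 \<or> chi $ Inr i \<noteq> 0}"

definition symp :: "'f::field ^ ('n::finite + 'n) \<Rightarrow> 'f ^ ('n + 'n) \<Rightarrow> 'f" where
  "symp chi chi' = (\<Sum>i\<in>UNIV. chi $ Inl i * chi' $ Inr i) - (\<Sum>i\<in>UNIV. chi' $ Inl i * chi $ Inr i)"

definition isotropic :: "('f::field ^ ('n::finite + 'n)) set \<Rightarrow> bool" where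
  "isotropic S \<longleftrightarrow> (\<forall>chi\<in>S. \<forall>chi'\<in>S. symp chi chi' = 0)"

definition symp_perp :: "('f::field ^ ('n::finite + 'n)) set \<Rightarrow> ('f ^ ('n + 'n)) set" where
  "symp_perp S = {chi. \<forall>sigma\<in>S. symp chi sigma = 0}"

definition wenum :: "('f::field ^ ('n::finite + 'n)) set \<Rightarrow> real \<Rightarrow> real" where
  "wenum S z = (\<Sum>chi\<in>S. z ^ wt chi)"

end

theory Submission
  imports Defs "HOL-Computational_Algebra.Polynomial"
begin

text \<open>Summing an additive character of \<open>\<int>/3\<close> over \<open>S\<close> detects \<open>S\<^sup>\<bottom>\<close>, and the character
  transform of \<open>z^wt\<close> factors over the coordinates. This gives the MacWilliams identity
  \<open>|S| B(z) = (\<Sum>s\<in>S. (1 + 8z)^(n - wt s) (1 - z)^wt s)\<close>, so with \<open>|S| = 3^(n-1)\<close> the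
  polynomial \<open>3A + B\<close> is a sum of one term per word of \<open>S\<close>, depending only on its weight.
  At \<open>z = -1/2\<close> we have \<open>1 + 8z = -3\<close> and \<open>1 - z = 3/2\<close>; for odd \<open>n\<close> each term vanishes
  there and its second derivative is \<open>8(1 - n)/3\<close> times its first. So \<open>-1/2\<close> is a root of
  \<open>3A + B\<close>, and a triple one as soon as it is double; since \<open>z(\<epsilon>) + 1/2 = 3\<epsilon>/(8\<epsilon> - 6)\<close>,
  this gives \<open>\<epsilon>' = O(\<epsilon>^3)\<close>.\<close>

lemma card3_field:
  assumes "CARD('f::{field,finite}) = 3"
  shows "(UNIV::'f set) = {0, 1, -1}" and "(-1::'f) \<noteq> 0" and "(-1::'f) \<noteq> 1"
    and "(1::'f) + 1 = -1"
proof -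
  have "card (UNIV - {0, 1::'f}) = 1"
    using assms by (subst card_Diff_subset) auto
  then obtain x where x: "UNIV - {0, 1::'f} = {x}"
    by (metis One_nat_def card_1_singleton_iff)
  then have "x \<noteq> 0" "x \<noteq> 1"
    by auto
  have "x + 1 \<notin> UNIV - {0, 1}"
    unfolding x by simp
  with \<open>x \<noteq> 0\<close> have "x + 1 = 0"
    by simp
  then have "x = -1"
    by (simp add: eq_neg_iff_add_eq_0)
  with x have elems: "UNIV - {0, 1::'f} = {-1}"
    by simp
  then show univ: "(UNIV::'f set) = {0, 1, -1}"
    by blast
  have "(-1::'f) \<in> UNIV - {0, 1}"
    unfolding elems by simp
  then show "(-1::'f) \<noteq> 0" and "(-1::'f) \<noteq> 1"
    by simp_all
  have "(1::'f) + 1 \<in> {0, 1, -1}"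
    unfolding univ[symmetric] by simp
  moreover have "(1::'f) + 1 \<noteq> 0"
    using \<open>(-1::'f) \<noteq> 1\<close> by (simp add: eq_neg_iff_add_eq_0[symmetric])
  moreover have "(1::'f) + 1 \<noteq> 1"
    by (simp only: add_cancel_left_right) simp
  ultimately show "(1::'f) + 1 = -1"
    by blast
qed

lemma card3_field_nonzero:
  assumes "CARD('f::{field,finite}) = 3" and "(c::'f) \<noteq> 0"
  shows "c = 1 \<or> c = -1"
proof -
  have "c \<in> {0, 1, -1}"
    unfolding card3_field(1)[OF assms(1), symmetric] by simp
  with assms(2) show ?thesis
    by simp
qed

definition omega :: complex where
  "omega = Complex (-1/2) (sqrt 3 / 2)"

lemma omega_squared: "omega\<^sup>2 = Complex (-1/2) (- sqrt 3 / 2)"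
  by (simp add: omega_def power2_eq_square complex_eq_iff)

lemma omega_cube: "omega ^ 3 = 1"
  by (simp add: power3_eq_cube omega_def complex_eq_iff)

lemma one_plus_omega_plus_omega_squared: "1 + omega + omega\<^sup>2 = 0"
  unfolding omega_squared by (simp add: omega_def complex_eq_iff)

lemma omega_ne_1: "omega \<noteq> 1" "omega\<^sup>2 \<noteq> 1"
  unfolding omega_squared by (simp_all add: omega_def complex_eq_iff)

text \<open>The additive character \<open>a \<mapsto> \<omega>\<^sup>a\<close> of the field \<open>{0, 1, -1}\<close>, read as \<open>\<int>/3\<close>.\<close>

definition char3 :: "'f::{field,finite} \<Rightarrow> complex" where
  "char3 a = (if a = 0 then 1 else if a = 1 then omega else omega\<^sup>2)"

lemma char3_zero [simp]: "char3 0 = 1"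
  by (simp add: char3_def)

lemma char3_add:
  assumes "CARD('f::{field,finite}) = 3"
  shows "char3 ((a::'f) + b) = char3 a * char3 b"
proof -
  note F = card3_field[OF assms]
  have sums: "(1::'f) + 1 = -1" "(-1::'f) + -1 = 1" "(1::'f) + -1 = 0" "(-1::'f) + 1 = 0"
    using F(4) by (simp_all add: minus_add_distrib[symmetric])
  have vals: "char3 (1::'f) = omega" "char3 (-1::'f) = omega\<^sup>2"
    using F(2,3) by (simp_all add: char3_def)
  have prods: "omega * omega = omega\<^sup>2" "omega\<^sup>2 * omega\<^sup>2 = omega" "omega * omega\<^sup>2 = 1"
    "omega\<^sup>2 * omega = 1"
    using omega_cube by (simp_all add: power2_eq_square power3_eq_cube mult.assoc)
  have "a \<in> {0, 1, -1}" "b \<in> {0, 1, -1}"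
    using F(1) by auto
  then show ?thesis
    by (auto simp only: insert_iff empty_iff sums vals prods char3_zero add_0_left add_0_right
        mult_1_left mult_1_right)
qed

lemma char3_sum:
  assumes "CARD('f::{field,finite}) = 3"
  shows "char3 (\<Sum>x\<in>X. (f x :: 'f)) = (\<Prod>x\<in>X. char3 (f x))"
  by (induction X rule: infinite_finite_induct) (simp_all add: char3_add[OF assms])

lemma char3_ne_1:
  assumes "CARD('f::{field,finite}) = 3" and "(c::'f) \<noteq> 0"
  shows "char3 c \<noteq> 1"
  using card3_field_nonzero[OF assms] card3_field(2,3)[OF assms(1)]
  by (auto simp: char3_def omega_ne_1)

lemma sum_char3_scaled:
  assumes "CARD('f::{field,finite}) = 3" and "(c::'f) \<noteq> 0"
  shows "(\<Sum>a\<in>UNIV. char3 (a * c)) = 0"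
proof -
  note F = card3_field[OF assms(1)]
  have "(0::'f) \<notin> {1, -1}" "(1::'f) \<notin> {-1}"
    using F(2,3) by auto
  then have "(\<Sum>a\<in>UNIV. char3 (a * c)) = 1 + char3 c + char3 (- c)"
    unfolding F(1) by (simp add: add.assoc)
  also have "\<dots> = 1 + omega + omega\<^sup>2"
    using card3_field_nonzero[OF assms] F(2,3) by (auto simp: char3_def)
  finally show ?thesis
    using one_plus_omega_plus_omega_squared by simp
qed

lemma symp_add_right: "symp chi (a + b) = symp chi a + symp chi b"
  by (simp add: symp_def sum.distrib algebra_simps)

lemma sum_char3_symp_subspace:
  fixes S :: "('f::{field,finite} ^ ('n::finite + 'n)) set"
  assumes F3: "CARD('f) = 3" and sub: "vec.subspace S"
  shows "(\<Sum>s\<in>S. char3 (symp chi s)) = (if chi \<in> symp_perp S then of_nat (card S) else 0)"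
proof (cases "chi \<in> symp_perp S")
  case True
  then show ?thesis
    by (simp add: symp_perp_def)
next
  case False
  then obtain s0 where s0: "s0 \<in> S" "symp chi s0 \<noteq> 0"
    by (auto simp: symp_perp_def)
  have "(\<Sum>s\<in>S. char3 (symp chi (s + s0))) = (\<Sum>s\<in>S. char3 (symp chi s))"
    by (rule sum.reindex_bij_witness[of S "\<lambda>t. t - s0" "\<lambda>s. s + s0"])
       (auto simp: vec.subspace_add[OF sub] vec.subspace_diff[OF sub] s0)
  then have "char3 (symp chi s0) * (\<Sum>s\<in>S. char3 (symp chi s)) = (\<Sum>s\<in>S. char3 (symp chi s))"
    by (simp add: symp_add_right char3_add[OF F3] sum_distrib_left mult.commute)
  then have "(char3 (symp chi s0) - 1) * (\<Sum>s\<in>S. char3 (symp chi s)) = 0"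
    by (simp add: algebra_simps)
  then show ?thesis
    using char3_ne_1[OF F3 s0(2)] False by simp
qed

lemma sum_char3_pair:
  assumes F3: "CARD('f::{field,finite}) = 3"
  shows "(\<Sum>p\<in>UNIV. complex_of_real (if p = (0, 0) then 1 else z) * char3 (fst p * (y::'f) - x * snd p))
    = complex_of_real (if (x, y) = (0, 0) then 1 + 8 * z else 1 - z)"
proof -
  define g where "g p = char3 (fst p * y - x * snd p)" for p :: "'f \<times> 'f"
  have g_prod: "(\<Sum>p\<in>UNIV. g p) = (\<Sum>a\<in>UNIV. char3 (a * y)) * (\<Sum>b\<in>UNIV. char3 (b * - x))"
  proof -
    have "g p = char3 (fst p * y) * char3 (snd p * - x)" for p
      unfolding g_def by (subst char3_add[OF F3, symmetric]) (simp add: algebra_simps)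
    then show ?thesis
      by (simp add: sum_product sum.cartesian_product case_prod_beta UNIV_Times_UNIV[symmetric]
          del: UNIV_Times_UNIV)
  qed
  have g_sum: "(\<Sum>p\<in>UNIV. g p) = (if (x, y) = (0, 0) then 9 else 0)"
  proof (cases "(x, y) = (0, 0)")
    case True
    then show ?thesis
      using F3 by (simp add: g_def card_cartesian_product flip: UNIV_Times_UNIV)
  next
    case False
    then show ?thesis
      unfolding g_prod using sum_char3_scaled[OF F3, of y] sum_char3_scaled[OF F3, of "- x"]
      by (auto simp del: mult_minus_right)
  qed
  have "(\<Sum>p\<in>UNIV. complex_of_real (if p = (0, 0) then 1 else z) * g p)
      = (\<Sum>p\<in>UNIV. complex_of_real z * g p + (if p = (0, 0) then complex_of_real (1 - z) * g p else 0))"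
    by (rule sum.cong) (auto simp: algebra_simps)
  also have "\<dots> = complex_of_real z * (\<Sum>p\<in>UNIV. g p) + complex_of_real (1 - z)"
    by (simp add: sum.distrib sum_distrib_left g_def)
  also have "\<dots> = complex_of_real (if (x, y) = (0, 0) then 1 + 8 * z else 1 - z)"
    unfolding g_sum by (simp add: algebra_simps)
  finally show ?thesis
    by (simp add: g_def)
qed

lemma sum_weight_char3_symp:
  fixes s :: "'f::{field,finite} ^ ('n::finite + 'n)"
  assumes F3: "CARD('f) = 3"
  shows "(\<Sum>chi\<in>UNIV. complex_of_real (z ^ wt chi) * char3 (symp chi s))
    = complex_of_real ((1 + 8 * z) ^ (CARD('n) - wt s) * (1 - z) ^ wt s)"
proof -
  define G where "G i p = complex_of_real (if p = (0, 0) then 1 else z)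
      * char3 (fst p * s $ Inr i - s $ Inl i * snd p)" for i :: 'n and p :: "'f \<times> 'f"
  define coord where "coord chi i = (chi $ Inl i, chi $ Inr i)" for chi :: "'f ^ ('n + 'n)" and i
  have factor: "complex_of_real (z ^ wt chi) * char3 (symp chi s) = (\<Prod>i\<in>UNIV. G i (coord chi i))"
    for chi
  proof -
    have "{i. chi $ Inl i \<noteq> 0 \<or> chi $ Inr i \<noteq> 0} = - {i. coord chi i = (0, 0)}"
      by (auto simp: coord_def)
    then have "z ^ wt chi = (\<Prod>i\<in>UNIV. if coord chi i = (0, 0) then 1 else z)"
      by (simp add: prod.If_cases wt_def)
    moreover have "char3 (symp chi s)
        = (\<Prod>i\<in>UNIV. char3 (chi $ Inl i * s $ Inr i - s $ Inl i * chi $ Inr i))"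
      by (simp add: symp_def char3_sum[OF F3] sum_subtractf[symmetric])
    ultimately show ?thesis
      by (simp add: G_def coord_def prod.distrib)
  qed
  have "bij_betw coord UNIV UNIV"
    by (rule bij_betw_byWitness[where f' = "\<lambda>g. \<chi> k. case k of Inl i \<Rightarrow> fst (g i) | Inr i \<Rightarrow> snd (g i)"])
       (auto simp: coord_def vec_eq_iff fun_eq_iff split: sum.split)
  have "(\<Sum>chi\<in>UNIV. complex_of_real (z ^ wt chi) * char3 (symp chi s))
      = (\<Sum>chi\<in>UNIV. \<Prod>i\<in>UNIV. G i (coord chi i))"
    by (simp only: factor)
  also have "\<dots> = (\<Sum>g\<in>UNIV. \<Prod>i\<in>UNIV. G i (g i))"
    using \<open>bij_betw coord UNIV UNIV\<close> by (rule sum.reindex_bij_betw)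
  also have "\<dots> = (\<Prod>i\<in>UNIV. \<Sum>p\<in>UNIV. G i p)"
    using prod_sum_PiE[of "UNIV :: 'n set" "\<lambda>_. UNIV" G] by simp
  also have "\<dots> = (\<Prod>i\<in>UNIV. complex_of_real (if coord s i = (0, 0) then 1 + 8 * z else 1 - z))"
    unfolding G_def coord_def by (simp only: sum_char3_pair[OF F3])
  also have "\<dots> = complex_of_real ((1 + 8 * z) ^ (CARD('n) - wt s) * (1 - z) ^ wt s)"
  proof -
    have "{i. coord s i = (0, 0)} = UNIV - {i. s $ Inl i \<noteq> 0 \<or> s $ Inr i \<noteq> 0}"
      by (auto simp: coord_def)
    then have "card {i. coord s i = (0, 0)} = CARD('n) - wt s"
      by (simp add: card_Diff_subset wt_def)
    moreover have "UNIV \<inter> - {i. coord s i = (0, 0)} = {i. s $ Inl i \<noteq> 0 \<or> s $ Inr i \<noteq> 0}"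
      by (auto simp: coord_def)
    ultimately show ?thesis
      by (simp add: prod.If_cases wt_def flip: of_real_prod)
  qed
  finally show ?thesis .
qed

theorem macwilliams_symp:
  fixes S :: "('f::{field,finite} ^ ('n::finite + 'n)) set"
  assumes F3: "CARD('f) = 3" and sub: "vec.subspace S"
  shows "real (card S) * wenum (symp_perp S) z
    = (\<Sum>s\<in>S. (1 + 8 * z) ^ (CARD('n) - wt s) * (1 - z) ^ wt s)"
proof -
  have "complex_of_real (real (card S) * wenum (symp_perp S) z)
      = (\<Sum>chi\<in>UNIV. if chi \<in> symp_perp S then of_nat (card S) * complex_of_real (z ^ wt chi) else 0)"
    by (simp add: wenum_def sum_distrib_left sum.If_cases)
  also have "\<dots> = (\<Sum>chi\<in>UNIV. complex_of_real (z ^ wt chi) * (if chi \<in> symp_perp S then of_nat (card S) else 0))"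
    by (rule sum.cong) auto
  also have "\<dots> = (\<Sum>chi\<in>UNIV. \<Sum>s\<in>S. complex_of_real (z ^ wt chi) * char3 (symp chi s))"
    by (simp add: sum_char3_symp_subspace[OF F3 sub] flip: sum_distrib_left)
  also have "\<dots> = (\<Sum>s\<in>S. \<Sum>chi\<in>UNIV. complex_of_real (z ^ wt chi) * char3 (symp chi s))"
    by (rule sum.swap)
  also have "\<dots> = (\<Sum>s\<in>S. complex_of_real ((1 + 8 * z) ^ (CARD('n) - wt s) * (1 - z) ^ wt s))"
    by (rule sum.cong[OF refl], rule sum_weight_char3_symp[OF F3])
  also have "\<dots> = complex_of_real (\<Sum>s\<in>S. (1 + 8 * z) ^ (CARD('n) - wt s) * (1 - z) ^ wt s)"
    by (simp only: of_real_sum)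
  finally show ?thesis
    by (simp only: of_real_eq_iff)
qed

lemma card_subspace:
  fixes S :: "('f::{field,finite} ^ 'm::finite) set"
  assumes sub: "vec.subspace S"
  shows "card S = CARD('f) ^ vec.dim S"
proof -
  obtain B where B: "B \<subseteq> S" "vec.independent B" "S \<subseteq> vec.span B" "card B = vec.dim S"
    by (rule vec.basis_exists)
  have "finite B"
    by simp
  have independent_coeffs: "\<forall>v\<in>B. c v = 0" if "(\<Sum>v\<in>B. c v *s v) = 0" for c
    using B(2) that vec.dependent_finite[OF \<open>finite B\<close>] by auto
  define comb where "comb u = (\<Sum>v\<in>B. u v *s v)" for u :: "'f ^ 'm \<Rightarrow> 'f"
  have "S = vec.span B"
    using vec.span_subspace[OF B(1,3) sub] by simp
  also have "\<dots> = comb ` (B \<rightarrow>\<^sub>E UNIV)"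
  proof -
    have "comb u \<in> comb ` (B \<rightarrow>\<^sub>E UNIV)" for u
    proof (rule image_eqI)
      show "comb u = comb (restrict u B)"
        unfolding comb_def by (rule sum.cong) auto
    qed simp
    then have "range comb = comb ` (B \<rightarrow>\<^sub>E UNIV)"
      by blast
    then show ?thesis
      by (simp add: vec.span_finite[OF \<open>finite B\<close>] comb_def)
  qed
  finally have S_image: "S = comb ` (B \<rightarrow>\<^sub>E UNIV)" .
  have "inj_on comb (B \<rightarrow>\<^sub>E UNIV)"
  proof (rule inj_onI)
    fix u u' assume u: "u \<in> B \<rightarrow>\<^sub>E UNIV" "u' \<in> B \<rightarrow>\<^sub>E UNIV" and "comb u = comb u'"
    then have "(\<Sum>v\<in>B. (u v - u' v) *s v) = 0"
      by (simp add: comb_def vec.scale_left_diff_distrib sum_subtractf)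
    then have "\<forall>v\<in>B. u v - u' v = 0"
      by (rule independent_coeffs)
    then show "u = u'"
      using u by (intro PiE_ext) auto
  qed
  then have "card S = card (B \<rightarrow>\<^sub>E (UNIV :: 'f set))"
    by (simp add: S_image card_image)
  also have "\<dots> = CARD('f) ^ vec.dim S"
    by (simp add: card_PiE B(4))
  finally show ?thesis .
qed

definition wenum_poly :: "('f::field ^ ('n::finite + 'n)) set \<Rightarrow> real poly" where
  "wenum_poly S = (\<Sum>s\<in>S. [:0, 1:] ^ wt s)"

definition macwilliams_poly :: "('f::field ^ ('n::finite + 'n)) set \<Rightarrow> real poly" where
  "macwilliams_poly S
    = smult (1 / real (card S)) (\<Sum>s\<in>S. [:1, 8:] ^ (CARD('n) - wt s) * [:1, -1:] ^ wt s)"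

lemma poly_wenum_poly: "poly (wenum_poly S) = wenum S"
  by (simp add: wenum_poly_def wenum_def poly_sum fun_eq_iff)

lemma wenum_symp_perp_eq_macwilliams_poly:
  fixes S :: "('f::{field,finite} ^ ('n::finite + 'n)) set"
  assumes F3: "CARD('f) = 3" and sub: "vec.subspace S"
  shows "wenum (symp_perp S) = poly (macwilliams_poly S)"
proof
  fix z
  have "card S \<noteq> 0"
    using vec.subspace_0[OF sub] by auto
  then show "wenum (symp_perp S) z = poly (macwilliams_poly S) z"
    using macwilliams_symp[OF F3 sub, of z]
    by (simp add: macwilliams_poly_def poly_sum field_simps)
qed

lemma wt_le_card: "wt (chi :: 'f::field ^ ('n::finite + 'n)) \<le> CARD('n)"
  unfolding wt_def by (rule card_mono) auto

lemma poly_pderiv_linear_power: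
  fixes a b x :: "'a::idom"
  shows "poly (pderiv ([:a, b:] ^ k)) x * (a + b * x) = of_nat k * b * (a + b * x) ^ k"
proof (cases k)
  case (Suc j)
  have "poly (pderiv ([:a, b:] ^ Suc j)) x = of_nat (Suc j) * (a + b * x) ^ j * b"
    by (simp add: pderiv_power_Suc pderiv_pCons mult.commute del: power_Suc of_nat_Suc)
  then show ?thesis
    unfolding Suc by (simp only: mult_ac power_Suc)
qed simp

lemma poly_pderiv2_linear_power:
  fixes a b x :: "'a::idom"
  shows "poly (pderiv (pderiv ([:a, b:] ^ k))) x * (a + b * x)\<^sup>2
    = of_nat k * (of_nat k - 1) * b\<^sup>2 * (a + b * x) ^ k"
proof (cases k)
  case (Suc j)
  have "poly (pderiv (pderiv ([:a, b:] ^ Suc j))) x = of_nat (Suc j) * b * poly (pderiv ([:a, b:] ^ j)) x"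
    by (simp add: pderiv_power_Suc pderiv_mult pderiv_smult pderiv_pCons del: power_Suc of_nat_Suc)
  then have "poly (pderiv (pderiv ([:a, b:] ^ k))) x * (a + b * x)\<^sup>2
      = of_nat (Suc j) * b * (a + b * x) * (poly (pderiv ([:a, b:] ^ j)) x * (a + b * x))"
    by (simp add: Suc power2_eq_square del: of_nat_Suc)
  also have "\<dots> = of_nat k * (of_nat k - 1) * b\<^sup>2 * (a + b * x) ^ k"
    by (simp add: poly_pderiv_linear_power Suc power2_eq_square)
  finally show ?thesis .
qed simp

lemma neg3_power_mult_three_halves_power:
  assumes "odd n" and "k + w = n"
  shows "(-3::real) ^ k * (3/2) ^ w / 3 ^ (n - 1) = -3 * (-1/2) ^ w"
proof -
  have "(3/2::real) ^ w = (-3) ^ w * (-1/2) ^ w"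
    by (simp flip: power_mult_distrib)
  then have "(-3::real) ^ k * (3/2) ^ w = (-3) ^ (k + w) * (-1/2) ^ w"
    by (simp add: power_add)
  also have "\<dots> = (-3) ^ n * (-1/2) ^ w"
    using assms(2) by simp
  also have "(-3::real) ^ n = -3 * 3 ^ (n - 1)"
    using assms(1) by (cases n) simp_all
  finally show ?thesis
    by simp
qed

text \<open>The contribution of a word of weight \<open>w\<close> to \<open>3A + B\<close> when \<open>|S| = 3^(n-1)\<close>.\<close>

definition balance_term :: "nat \<Rightarrow> nat \<Rightarrow> real poly" where
  "balance_term n w = smult 3 ([:0, 1:] ^ w) + smult (1 / 3 ^ (n - 1)) ([:1, 8:] ^ (n - w) * [:1, -1:] ^ w)"

lemma balance_term_root:
  assumes "odd n" and "w \<le> n"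
  shows "poly (balance_term n w) (-1/2) = 0"
  using neg3_power_mult_three_halves_power[OF assms(1), of "n - w" w] assms(2)
  by (simp add: balance_term_def)

lemma balance_term_pderiv2:
  assumes "odd n" and "w \<le> n"
  shows "poly (pderiv (pderiv (balance_term n w))) (-1/2)
    = 8 * (1 - real n) / 3 * poly (pderiv (balance_term n w)) (-1/2)"
proof -
  define k where "k = n - w"
  define c :: real where "c = 1 / 3 ^ (n - 1)"
  define Z F G :: "real poly" where "Z = [:0, 1:] ^ w" and "F = [:1, 8:] ^ k" and "G = [:1, -1:] ^ w"
  define x :: real where "x = -1/2"
  note d1 = poly_pderiv_linear_power[where x = x] and d2 = poly_pderiv2_linear_power[where x = x]
  have Z1: "poly (pderiv Z) x = -2 * real w * poly Z x"
    and Z2: "poly (pderiv (pderiv Z)) x = 4 * real w * (real w - 1) * poly Z x"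
    using d1[of 0 1 w] d2[of 0 1 w] by (simp_all add: Z_def x_def field_simps power2_eq_square)
  have F1: "poly (pderiv F) x = -8/3 * real k * poly F x"
    and F2: "poly (pderiv (pderiv F)) x = 64/9 * real k * (real k - 1) * poly F x"
    using d1[of 1 8 k] d2[of 1 8 k] by (simp_all add: F_def x_def field_simps)
  have G1: "poly (pderiv G) x = -2/3 * real w * poly G x"
    and G2: "poly (pderiv (pderiv G)) x = 4/9 * real w * (real w - 1) * poly G x"
    using d1[of 1 "-1" w] d2[of 1 "-1" w] by (simp_all add: G_def x_def field_simps power2_eq_square)
  have ZFG: "c * poly F x * poly G x = -3 * poly Z x"
    using neg3_power_mult_three_halves_power[OF assms(1), of k w] assms(2)
    by (simp add: c_def F_def G_def Z_def x_def k_def)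
  have n: "real n = real k + real w"
    using assms(2) by (simp add: k_def)
  have balance: "balance_term n w = smult 3 Z + smult c (F * G)"
    by (simp add: balance_term_def Z_def F_def G_def c_def k_def)
  show ?thesis
    unfolding balance x_def[symmetric] n using ZFG
    by (simp add: pderiv_add pderiv_smult pderiv_mult Z1 Z2 F1 F2 G1 G2) algebra
qed

lemma smult_sum_right: "smult a (\<Sum>x\<in>A. f x) = (\<Sum>x\<in>A. smult a (f x))"
  by (induction A rule: infinite_finite_induct) (simp_all add: smult_add_right)

lemma sum_balance_term:
  assumes "odd n" and "\<And>x. x \<in> X \<Longrightarrow> w x \<le> n"
  shows "poly (\<Sum>x\<in>X. balance_term n (w x)) (-1/2) = 0"
    and "poly ((pderiv ^^ 2) (\<Sum>x\<in>X. balance_term n (w x))) (-1/2)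
      = 8 * (1 - real n) / 3 * poly (pderiv (\<Sum>x\<in>X. balance_term n (w x))) (-1/2)"
proof -
  have d1: "pderiv (\<Sum>x\<in>X. balance_term n (w x)) = (\<Sum>x\<in>X. pderiv (balance_term n (w x)))"
    using higher_pderiv_sum[of 1] by simp
  have d2: "(pderiv ^^ 2) (\<Sum>x\<in>X. balance_term n (w x))
      = (\<Sum>x\<in>X. pderiv (pderiv (balance_term n (w x))))"
    using higher_pderiv_sum[of 2] by (simp add: numeral_2_eq_2)
  show "poly (\<Sum>x\<in>X. balance_term n (w x)) (-1/2) = 0"
    unfolding poly_sum using assms by (intro sum.neutral ballI balance_term_root) auto
  show "poly ((pderiv ^^ 2) (\<Sum>x\<in>X. balance_term n (w x))) (-1/2)
      = 8 * (1 - real n) / 3 * poly (pderiv (\<Sum>x\<in>X. balance_term n (w x))) (-1/2)"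
    unfolding d1 d2 poly_sum sum_distrib_left
    using assms by (intro sum.cong refl balance_term_pderiv2) auto
qed

lemma three_wenum_plus_macwilliams_poly:
  fixes S :: "('f::field ^ ('n::finite + 'n)) set"
  assumes "card S = 3 ^ (CARD('n) - 1)"
  shows "smult 3 (wenum_poly S) + macwilliams_poly S = (\<Sum>s\<in>S. balance_term CARD('n) (wt s))"
  using assms
  by (simp add: wenum_poly_def macwilliams_poly_def balance_term_def sum.distrib smult_sum_right)

lemma higher_deriv_poly: "(deriv ^^ k) (poly p) = poly ((pderiv ^^ k) p)"
proof (induction k)
  case (Suc k)
  have "deriv (poly q) = poly (pderiv q)" for q :: "'a::{real_normed_field} poly"
    by (rule ext, rule DERIV_imp_deriv, rule poly_DERIV)
  then show ?case
    by (simp add: Suc)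
qed simp

lemma linear_power_dvd_SucI:
  fixes p :: "'a::field_char_0 poly"
  assumes "poly p c = 0" and "[:-c, 1:] ^ k dvd pderiv p"
  shows "[:-c, 1:] ^ Suc k dvd p"
proof (cases "pderiv p = 0")
  case True
  then obtain h where "p = [:h:]"
    using pderiv_iszero by blast
  with assms(1) show ?thesis
    by simp
next
  case False
  then have "p \<noteq> 0"
    by auto
  have "k \<le> order c (pderiv p)"
    using assms(2) False by (simp add: order_divides)
  also have "order c (pderiv p) < order c p"
    using order_pderiv[OF \<open>p \<noteq> 0\<close> assms(1)] by simp
  finally have "Suc k \<le> order c p"
    by simp
  then show ?thesis
    unfolding order_divides by blast
qed

lemma triple_root_dvd:
  fixes p :: "'a::field_char_0 poly"
  assumes "poly p c = 0" and "poly (pderiv p) c = 0" and "poly (pderiv (pderiv p)) c = 0"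
  shows "[:-c, 1:] ^ 3 dvd p"
proof -
  have "[:-c, 1:] ^ 0 dvd pderiv (pderiv (pderiv p))"
    by simp
  then show ?thesis
    unfolding numeral_3_eq_3 using assms by (intro linear_power_dvd_SucI)
qed

lemma bigo_cube_at_zero_moebius:
  fixes p :: "real poly" and B :: "real \<Rightarrow> real"
  assumes "[:1/2, 1:] ^ 3 dvd p" and "isCont B (-1/2)" and "B (-1/2) \<noteq> 0"
  shows "(\<lambda>e. let z = (3 - e) / (8 * e - 6) in 3 * poly p z / (4 * B z)) \<in> O[at 0](\<lambda>e. e ^ 3)"
proof -
  obtain q where p: "p = [:1/2, 1:] ^ 3 * q"
    using assms(1) by (elim dvdE)
  define z where "z e = (3 - e) / (8 * e - 6)" for e :: real
  define h where "h e = 81 * poly q (z e) / (4 * (8 * e - 6) ^ 3 * B (z e))" for e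
  have z0: "z 0 = -1/2"
    by (simp add: z_def)
  have z_lim: "(z \<longlongrightarrow> -1/2) (at 0)"
    unfolding z0[symmetric] z_def by (intro tendsto_intros) auto
  then have "((\<lambda>e. B (z e)) \<longlongrightarrow> B (-1/2)) (at 0)" and "((\<lambda>e. poly q (z e)) \<longlongrightarrow> poly q (-1/2)) (at 0)"
    using assms(2) by (auto intro: isCont_tendsto_compose)
  then have "(h \<longlongrightarrow> h 0) (at 0)"
    unfolding h_def z0 using assms(3) z_lim by (intro tendsto_intros) auto
  moreover have "eventually (\<lambda>e. e \<noteq> 0 \<and> \<bar>e\<bar> < 1/2) (at (0::real))"
    unfolding eventually_at by (rule exI[of _ "1/2"]) (auto simp: dist_real_def)
  then have "eventually (\<lambda>e. (let w = z e in 3 * poly p w / (4 * B w)) / e ^ 3 = h e) (at 0)"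
  proof eventually_elim
    case (elim e)
    then have "8 * e - 6 \<noteq> 0"
      by auto
    then have "z e + 1/2 = 3 * e / (8 * e - 6)"
      by (simp add: z_def field_simps)
    then have "poly p (z e) = 27 * e ^ 3 / (8 * e - 6) ^ 3 * poly q (z e)"
      by (simp add: p power_divide power_mult_distrib add.commute)
    then show ?case
      using elim by (simp add: h_def Let_def)
  qed
  ultimately have "((\<lambda>e. (let w = z e in 3 * poly p w / (4 * B w)) / e ^ 3) \<longlongrightarrow> h 0) (at 0)"
    by (simp add: tendsto_cong)
  moreover have "eventually (\<lambda>e. e ^ 3 \<noteq> 0) (at (0::real))"
    by (simp add: eventually_at_filter)
  ultimately show ?thesis
    unfolding z_def by (rule bigoI_tendsto)
qed

theorem mainTheorem6:
  fixes S :: "('f::{field,finite} ^ ('n::finite + 'n)) set"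
    and A B :: "real \<Rightarrow> real"
  assumes F3: "CARD('f) = 3"
    and n_odd: "odd CARD('n)"
    and sub: "vec.subspace S"
    and dimS: "vec.dim S = CARD('n) - 1"
    and iso: "isotropic S"
    and A_def: "A = wenum S"
    and B_def: "B = wenum (symp_perp S)"
  shows "3 * A (-1/2) + B (-1/2) = 0 \<and>
    ((B (-1/2) \<noteq> 0 \<and> 3 * deriv A (-1/2) + deriv B (-1/2) = 0) \<longrightarrow>
       (3 * (deriv ^^ 2) A (-1/2) + (deriv ^^ 2) B (-1/2) = 0 \<and>
        (\<lambda>e::real. let z = (3 - e) / (8 * e - 6) in 3 * (3 * A z + B z) / (4 * B z))
          \<in> O[at 0](\<lambda>e. e ^ 3)))"
proof -
  define P where "P = smult 3 (wenum_poly S) + macwilliams_poly S"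
  have B: "B = poly (macwilliams_poly S)"
    using B_def wenum_symp_perp_eq_macwilliams_poly[OF F3 sub] by simp
  have derivs: "3 * (deriv ^^ k) A x + (deriv ^^ k) B x = poly ((pderiv ^^ k) P) x" for k x
    by (simp add: A_def B P_def higher_deriv_poly higher_pderiv_add higher_pderiv_smult
        flip: poly_wenum_poly)
  have "card S = 3 ^ (CARD('n) - 1)"
    using card_subspace[OF sub] F3 dimS by simp
  then have P_sum: "P = (\<Sum>s\<in>S. balance_term CARD('n) (wt s))"
    unfolding P_def by (rule three_wenum_plus_macwilliams_poly)
  note balance = sum_balance_term[OF n_odd, of S wt, OF wt_le_card, folded P_sum]
  show ?thesis
  proof (intro conjI impI)
    show "3 * A (-1/2) + B (-1/2) = 0"
      using derivs[of 0] balance(1) by simp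
    assume H: "B (-1/2) \<noteq> 0 \<and> 3 * deriv A (-1/2) + deriv B (-1/2) = 0"
    then have "poly (pderiv P) (-1/2) = 0"
      using derivs[of 1] by simp
    moreover have "poly ((pderiv ^^ 2) P) (-1/2) = 0"
      using balance(2) \<open>poly (pderiv P) (-1/2) = 0\<close> by simp
    ultimately show "3 * (deriv ^^ 2) A (-1/2) + (deriv ^^ 2) B (-1/2) = 0"
      using derivs[of 2] by simp
    have "[:1/2, 1:] ^ 3 dvd P"
      using triple_root_dvd[of P "-1/2"] balance(1) \<open>poly (pderiv P) (-1/2) = 0\<close>
        \<open>poly ((pderiv ^^ 2) P) (-1/2) = 0\<close> by (simp add: numeral_2_eq_2)
    moreover have "poly P z = 3 * A z + B z" for z
      using derivs[of 0 z] by simp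
    ultimately show "(\<lambda>e::real. let z = (3 - e) / (8 * e - 6) in 3 * (3 * A z + B z) / (4 * B z))
        \<in> O[at 0](\<lambda>e. e ^ 3)"
      using bigo_cube_at_zero_moebius[of P B] H by (simp add: B)
  qed
qed

end
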